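(* Let $C\in\mathcal R_{\rm dec}$ with $|C|\ge2$ and root share decomposition $C=C_1\circ_kC_2$, where $C_1,C_2$ are decorated by inheritance from $C$ and each is labeled by its own intersection order. Let $d,d_1,d_2$ be the decorations of the base chords of $C,C_1,C_2$ respectively. Then for every integer $l$ with $1<l<b(C)$, $$\hat a_C\,a_{d,\,b(C)-l}=\hat a_{C_1}\,a_{d_1,\,b(C_1)-1}\;\hat a_{C_2}\,a_{d_2,\,b(C_2)-l+1}.$$
   Context: Fix a commutative ring $A$ and elements $a_{k,i}\in A$ ($k\ge1$, $i\ge0$). Chord diagrams. A rooted chord diagram of size $n$ is a fixed-point-free involution $C$ of $\{1,\dots,2n\}$, viewed as $n$ chords (transpositions) $(x\,y)$ with $x<y$; the chord containing $1$ is the root chord; $|C|=n$. Chords $(x\,y),(x'\,y')$ cross if $x<x'<y<y'$ or $x'<x<y'<y$. $C$ is connected if the graph whose vertices are the chords, with edges joining crossing chords, is connected. For a set of $m$ chords with $2m$ distinct positive integer endpoints, $\mathrm{norm}$ of it is the chord diagram on $\{1,\dots,2m\}$ obtained by replacing each endpoint by its rank among the $2m$ endpoints. Intersection order. The chords of a rooted connected chord diagram of size $n$ are labeled $1,\dots,n$ recursively: the root chord gets the first available label; the remaining chords split into connected components (w.r.t. crossing); the components are processed in increasing order of their smallest endpoint, each regarded as a rooted connected chord diagram rooted at its chord with smallest endpoint and labeled recursively with the next block of consecutive labels. "Chord $i$" means the chord with label $i$. Terminal and base chords. Chord $i$ is terminal if it crosses no chord $j$ with $j>i$. If $t_0<t_1<\dots<t_m$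 are the terminal labels, the base chord is $b(C)=t_0$. Insertion of chord diagrams. For $C$ of size $n$ with chords $(x_1y_1),\dots,(x_ny_n)$, root $(x_1y_1)$ ($x_1=1$), $D$ of size $m$ with chords $(x'_iy'_i)$, and $1\le k\le 2m-1$, $C\circ_kD$ is the chord diagram of size $n+m$ with chords $(1,y_1+k)$, $(x_i+k,y_i+k)$ ($2\le i\le n$), $(H(x'_i),H(y'_i))$ ($1\le i\le m$), where $H(x)=x+1$ if $x\le k$ and $H(x)=x+2n$ otherwise. Root share decomposition. For rooted connected $C$ with $|C|\ge2$, let $C_1$ be the connected component (of the chords other than the root) having the smallest endpoint among such components. There is a unique $i$ with $C=C'\circ_iC''$, where $C'=\mathrm{norm}(C\setminus C_1)$, $C''=\mathrm{norm}(C_1)$. (In the lemma, $C_1$ denotes $C'$ and $C_2$ denotes $C''$.) Decorations. A decorated chord diagram is a rooted connected chord diagram with a positive integer $d_i$ on each chord $i$; $\mathcal R_{\rm dec}$ is the set of all of them. Monomial. With terminal labels $t_0<\dots<t_m$, $\hat a_C=\prod_{c=1}^m a_{d_{t_c},t_c-t_{c-1}}\cdot\prod_{i\text{ non-terminal}}a_{d_i,0}$. *)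

theory Defs
  imports Main
begin

type_synonym chord = "nat \<times> nat"

definition ends :: "chord set \<Rightarrow> nat set" where
  "ends S = fst ` S \<union> snd ` S"

definition is_cd :: "chord set \<Rightarrow> bool" where
  "is_cd C \<longleftrightarrow> finite C \<and> (\<forall>c\<in>C. fst c < snd c)
     \<and> (\<forall>c\<in>C. \<forall>c'\<in>C. c \<noteq> c' \<longrightarrow> {fst c, snd c} \<inter> {fst c', snd c'} = {})
     \<and> ends C = {1..2 * card C}"

definition crosses :: "chord \<Rightarrow> chord \<Rightarrow> bool" where
  "crosses c c' \<longleftrightarrow> (fst c < fst c' \<and> fst c' < snd c \<and> snd c < snd c')
                   \<or> (fst c' < fst c \<and> fst c < snd c' \<and> snd c' < snd c)"

definition cross_rel :: "chord set \<Rightarrow> (chord \<times> chord) set" where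
  "cross_rel S = {(c, c'). c \<in> S \<and> c' \<in> S \<and> crosses c c'}"

definition connected_cd :: "chord set \<Rightarrow> bool" where
  "connected_cd S \<longleftrightarrow> (\<forall>c\<in>S. \<forall>c'\<in>S. (c, c') \<in> (cross_rel S)\<^sup>*)"

definition comp :: "chord set \<Rightarrow> chord \<Rightarrow> chord set" where
  "comp S c = {c' \<in> S. (c, c') \<in> (cross_rel S)\<^sup>*}"

definition components :: "chord set \<Rightarrow> chord set set" where
  "components S = comp S ` S"

definition min_end :: "chord set \<Rightarrow> nat" where
  "min_end K = Min (ends K)"

definition comps_sorted :: "chord set \<Rightarrow> chord set list" where
  "comps_sorted S = sorted_key_list_of_set min_end (components S)"

definition root :: "chord set \<Rightarrow> chord" where
  "root S = (THE c. c \<in> S \<and> fst c = Min (ends S))"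

text \<open>intersection order, with fuel (fuel = card S suffices)\<close>
primrec io :: "nat \<Rightarrow> chord set \<Rightarrow> chord list" where
  "io 0 S = []"
| "io (Suc n) S = (if S = {} then [] else
      root S # concat (map (io n) (comps_sorted (S - {root S}))))"

definition int_order :: "chord set \<Rightarrow> chord list" where
  "int_order S = io (card S) S"

text \<open>chord with label i (labels 1..card S)\<close>
definition chord_lab :: "chord set \<Rightarrow> nat \<Rightarrow> chord" where
  "chord_lab S i = int_order S ! (i - 1)"

definition terminal :: "chord set \<Rightarrow> nat \<Rightarrow> bool" where
  "terminal S i \<longleftrightarrow> i \<in> {1..card S} \<and>
     (\<forall>j\<in>{i<..card S}. \<not> crosses (chord_lab S i) (chord_lab S j))"

definition terminals :: "chord set \<Rightarrow> nat set" where
  "terminals S = {i. terminal S i}"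

definition base :: "chord set \<Rightarrow> nat" where
  "base S = Min (terminals S)"

text \<open>the monomial hat a_C; decorations are given as a function on chords\<close>
definition monomial :: "(nat \<Rightarrow> nat \<Rightarrow> 'r::comm_ring_1) \<Rightarrow> (chord \<Rightarrow> nat) \<Rightarrow> chord set \<Rightarrow> 'r" where
  "monomial a d S = (let T = sorted_list_of_set (terminals S) in
     (\<Prod>c\<in>{1..<length T}. a (d (chord_lab S (T ! c))) (T ! c - T ! (c - 1)))
     * (\<Prod>i\<in>{1..card S} - terminals S. a (d (chord_lab S i)) 0))"

definition rank :: "chord set \<Rightarrow> nat \<Rightarrow> nat" where
  "rank S x = card {e \<in> ends S. e \<le> x}"

definition nmap :: "chord set \<Rightarrow> chord \<Rightarrow> chord" where
  "nmap S c = (rank S (fst c), rank S (snd c))"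

definition norm_cd :: "chord set \<Rightarrow> chord set" where
  "norm_cd S = nmap S ` S"

definition inherit :: "(chord \<Rightarrow> nat) \<Rightarrow> chord set \<Rightarrow> chord \<Rightarrow> nat" where
  "inherit d S = (\<lambda>c'. d (inv_into S (nmap S) c'))"

text \<open>root share decomposition: first component of the non-root chords\<close>
definition first_comp :: "chord set \<Rightarrow> chord set" where
  "first_comp C = hd (comps_sorted (C - {root C}))"

definition rs_left :: "chord set \<Rightarrow> chord set" where
  "rs_left C = norm_cd (C - first_comp C)"

definition rs_right :: "chord set \<Rightarrow> chord set" where
  "rs_right C = norm_cd (first_comp C)"

end

theory Submission
  imports Defs
begin

text \<open>Read the monomial of a decorated diagram along its intersection order: a non-terminal chord
  contributes \<open>a(d,0)\<close>, a terminal chord \<open>a(d,g)\<close> with \<open>g\<close> the distance back to the previous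
  terminal chord, and the first terminal chord nothing. For \<open>C = C1 \<circ>k C2\<close> the intersection
  order of \<open>C\<close> is the root, then the order of \<open>C2\<close>, then the order of \<open>C1\<close> without its root.
  No chord of \<open>C2\<close> crosses a chord of \<open>C1\<close> other than the root, so every chord keeps its
  terminality, while the root of \<open>C\<close> crosses something and is not terminal. Hence
  \<open>b(C) = b(C2) + 1\<close> with the same base chord, and the factor \<open>a(d1, b(C1) - 1)\<close> is exactly the
  gap factor in \<open>C\<close> between the last chord of \<open>C2\<close> (always terminal) and the first terminal
  chord of the \<open>C1\<close>-part. All of this is invariant under order-preserving relabelling of
  endpoints, which is all that normalization does.\<close>

text \<open>The chord sets met in the recursion (components, a diagram minus a component) are chord
  diagrams except that their endpoints need not be \<open>{1..2n}\<close>.\<close>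

definition chord_family :: "chord set \<Rightarrow> bool" where
  "chord_family S \<longleftrightarrow> finite S \<and> (\<forall>c\<in>S. fst c < snd c)
     \<and> (\<forall>c\<in>S. \<forall>c'\<in>S. c \<noteq> c' \<longrightarrow> {fst c, snd c} \<inter> {fst c', snd c'} = {})"

lemma is_cd_chord_family: "is_cd C \<Longrightarrow> chord_family C"
  unfolding is_cd_def chord_family_def by blast

lemma chord_family_subset: "chord_family S \<Longrightarrow> T \<subseteq> S \<Longrightarrow> chord_family T"
  unfolding chord_family_def by (meson finite_subset subsetD)

lemma chord_family_finite: "chord_family S \<Longrightarrow> finite S"
  unfolding chord_family_def by blast

lemma chord_family_shared_end:
  assumes "chord_family S" "c \<in> S" "c' \<in> S" "e \<in> {fst c, snd c}" "e \<in> {fst c', snd c'}"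
  shows "c = c'"
  using assms unfolding chord_family_def by blast

lemma finite_ends: "finite S \<Longrightarrow> finite (ends S)"
  unfolding ends_def by simp

lemma ends_mono: "S \<subseteq> T \<Longrightarrow> ends S \<subseteq> ends T"
  unfolding ends_def by auto

lemma ends_nonempty: "S \<noteq> {} \<Longrightarrow> ends S \<noteq> {}"
  unfolding ends_def by auto

lemma endpoints_in_ends: "c \<in> S \<Longrightarrow> fst c \<in> ends S" "c \<in> S \<Longrightarrow> snd c \<in> ends S"
  unfolding ends_def by auto

lemma root_eqI:
  assumes "chord_family S" "c \<in> S" "fst c = Min (ends S)"
  shows "root S = c"
  unfolding root_def
proof (rule the_equality)
  fix c' assume "c' \<in> S \<and> fst c' = Min (ends S)"
  then show "c' = c"
    using chord_family_shared_end[OF assms(1) _ assms(2), of c' "fst c"] assms(3) by auto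
qed (use assms in simp)

lemma root_in:
  assumes "chord_family S" "S \<noteq> {}"
  shows "root S \<in> S" "fst (root S) = Min (ends S)"
proof -
  have fin: "finite (ends S)"
    using assms chord_family_finite finite_ends by blast
  obtain c where c: "c \<in> S" "Min (ends S) \<in> {fst c, snd c}"
    using Min_in[OF fin ends_nonempty[OF assms(2)]] unfolding ends_def by auto
  have "Min (ends S) \<le> fst c"
    using Min_le[OF fin endpoints_in_ends(1)[OF c(1)]] .
  moreover have "fst c < snd c"
    using assms(1) c(1) unfolding chord_family_def by auto
  ultimately have "fst c = Min (ends S)"
    using c(2) by auto
  then show "root S \<in> S" "fst (root S) = Min (ends S)"
    using root_eqI[OF assms(1) c(1)] c(1) by auto
qed

subsection \<open>Crossing components\<close>

lemma crosses_sym: "crosses c c' = crosses c' c"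
  unfolding crosses_def by auto

lemma sym_cross_rel: "sym (cross_rel S)"
  unfolding sym_def cross_rel_def using crosses_sym by auto

lemma cross_rel_rtrancl_sym: "(x, y) \<in> (cross_rel S)\<^sup>* \<Longrightarrow> (y, x) \<in> (cross_rel S)\<^sup>*"
  using sym_rtrancl[OF sym_cross_rel] unfolding sym_def by blast

lemma comp_subset: "comp S c \<subseteq> S"
  unfolding comp_def by auto

lemma comp_self: "c \<in> S \<Longrightarrow> c \<in> comp S c"
  unfolding comp_def by auto

lemma comp_eq: "c' \<in> comp S c \<Longrightarrow> comp S c' = comp S c"
proof -
  assume "c' \<in> comp S c"
  then have cc': "(c, c') \<in> (cross_rel S)\<^sup>*"
    unfolding comp_def by auto
  note c'c = cross_rel_rtrancl_sym[OF cc']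
  show ?thesis
    unfolding comp_def using rtrancl_trans[OF cc'] rtrancl_trans[OF c'c] by auto
qed

lemma components_disjoint:
  assumes "K1 \<in> components S" "K2 \<in> components S" "K1 \<noteq> K2"
  shows "K1 \<inter> K2 = {}"
proof (rule ccontr)
  assume "K1 \<inter> K2 \<noteq> {}"
  then obtain x where x: "x \<in> K1" "x \<in> K2"
    by blast
  obtain c1 c2 where "K1 = comp S c1" "K2 = comp S c2"
    using assms(1,2) unfolding components_def by blast
  then show False
    using comp_eq[of x S c1] comp_eq[of x S c2] x assms(3) by simp
qed

lemma components_nonempty: "K \<in> components S \<Longrightarrow> K \<noteq> {}"
  unfolding components_def using comp_self by blast

lemma components_subset: "K \<in> components S \<Longrightarrow> K \<subseteq> S"
  unfolding components_def using comp_subset by blast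

lemma Union_components: "\<Union> (components S) = S"
proof
  show "\<Union> (components S) \<subseteq> S"
    using components_subset by blast
  show "S \<subseteq> \<Union> (components S)"
    using comp_self unfolding components_def by blast
qed

lemma finite_components: "finite S \<Longrightarrow> finite (components S)"
  unfolding components_def by simp

lemma components_crossing_closed:
  assumes "K \<in> components S" "x \<in> K" "y \<in> S" "crosses x y"
  shows "y \<in> K"
proof -
  obtain k where k: "K = comp S k"
    using assms(1) unfolding components_def by blast
  have "(k, x) \<in> (cross_rel S)\<^sup>*"
    using assms(2) k unfolding comp_def by auto
  moreover have "(x, y) \<in> cross_rel S"
    using assms(2-4) components_subset[OF assms(1)] unfolding cross_rel_def by auto
  ultimately show ?thesis
    using k assms(3) unfolding comp_def by auto
qed

lemma components_no_crossing:
  assumes "K1 \<in> components S" "K2 \<in> components S" "K1 \<noteq> K2" "x \<in> K1" "y \<in> K2"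
  shows "\<not> crosses x y"
  using components_crossing_closed[OF assms(1,4)] components_disjoint[OF assms(1-3)]
    components_subset[OF assms(2)] assms(5) by blast

lemma comp_Diff_component:
  assumes K: "K \<in> components S" and c: "c \<in> S - K"
  shows "comp (S - K) c = comp S c"
proof
  have "cross_rel (S - K) \<subseteq> cross_rel S"
    unfolding cross_rel_def by auto
  then show "comp (S - K) c \<subseteq> comp S c"
    unfolding comp_def using rtrancl_mono by blast
next
  show "comp S c \<subseteq> comp (S - K) c"
  proof
    fix y assume "y \<in> comp S c"
    then have y: "(c, y) \<in> (cross_rel S)\<^sup>*" "y \<in> S"
      unfolding comp_def by auto
    from y(1) have "y \<notin> K \<and> (c, y) \<in> (cross_rel (S - K))\<^sup>*"
    proof (induction rule: rtrancl_induct)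
      case (step y z)
      then have z: "z \<in> S" "y \<in> S" "crosses z y"
        unfolding cross_rel_def by (auto simp: crosses_sym)
      then have "z \<notin> K"
        using components_crossing_closed[OF K] step.IH by blast
      then have "(y, z) \<in> cross_rel (S - K)"
        using z step.IH unfolding cross_rel_def by (auto simp: crosses_sym)
      then show ?case
        using step.IH \<open>z \<notin> K\<close> by auto
    qed (use c in auto)
    then show "y \<in> comp (S - K) c"
      using y unfolding comp_def by auto
  qed
qed

lemma components_Diff_component:
  assumes K: "K \<in> components S"
  shows "components (S - K) = components S - {K}"
proof -
  have "components (S - K) = comp S ` (S - K)"
    unfolding components_def using comp_Diff_component[OF K] by (auto simp: image_iff)
  also have "\<dots> = components S - {K}"
  proof
    show "comp S ` (S - K) \<subseteq> components S - {K}"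
      unfolding components_def using comp_self by auto
    show "components S - {K} \<subseteq> comp S ` (S - K)"
    proof
      fix K' assume K': "K' \<in> components S - {K}"
      then obtain c where c: "c \<in> S" "K' = comp S c"
        unfolding components_def by auto
      obtain k where k: "K = comp S k"
        using K unfolding components_def by auto
      have "c \<notin> K"
        using comp_eq[of c S k] k c K' by auto
      then show "K' \<in> comp S ` (S - K)"
        using c by auto
    qed
  qed
  finally show ?thesis .
qed

lemma min_end_in: "finite K \<Longrightarrow> K \<noteq> {} \<Longrightarrow> min_end K \<in> ends K"
  unfolding min_end_def by (rule Min_in[OF finite_ends ends_nonempty])

lemma inj_on_min_end_components:
  assumes "chord_family S"
  shows "inj_on min_end (components S)"
proof (rule inj_onI)
  fix K1 K2 assume K: "K1 \<in> components S" "K2 \<in> components S" "min_end K1 = min_end K2"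
  have fin: "finite K1" "finite K2"
    using K(1,2) components_subset chord_family_finite[OF assms] finite_subset by metis+
  obtain c1 where c1: "c1 \<in> K1" "min_end K1 \<in> {fst c1, snd c1}"
    using min_end_in[OF fin(1) components_nonempty[OF K(1)]] unfolding ends_def by auto
  obtain c2 where c2: "c2 \<in> K2" "min_end K2 \<in> {fst c2, snd c2}"
    using min_end_in[OF fin(2) components_nonempty[OF K(2)]] unfolding ends_def by auto
  have "c1 \<in> S" "c2 \<in> S"
    using c1(1) c2(1) K(1,2) components_subset by blast+
  then have "c1 = c2"
    using chord_family_shared_end[OF assms, of c1 c2 "min_end K1"] c1(2) c2(2) K(3) by simp
  then show "K1 = K2"
    using components_disjoint[OF K(1,2)] c1(1) c2(1) by blast
qed

context linorder
begin

lemma sorted_key_list_of_set_props: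
  assumes "inj_on f A" "finite A"
  shows "set (sorted_key_list_of_set f A) = A"
    and "sorted_wrt (<) (map f (sorted_key_list_of_set f A))"
    and "distinct (sorted_key_list_of_set f A)"
proof -
  interpret folding_insort_key "(\<le>)" "(<)" A f
    by unfold_locales (rule assms(1))
  show "set (sorted_key_list_of_set f A) = A" "sorted_wrt (<) (map f (sorted_key_list_of_set f A))"
    using assms by simp_all
  show "distinct (sorted_key_list_of_set f A)"
    using distinct_sorted_key_list_of_set[of A] distinct_map by blast
qed

lemma sorted_key_list_of_set_eqI:
  assumes "inj_on f A" "finite A" "sorted_wrt (<) (map f xs)" "set xs = A"
  shows "sorted_key_list_of_set f A = xs"
proof -
  interpret folding_insort_key "(\<le>)" "(<)" A f
    by unfold_locales (rule assms(1))
  have "distinct (map f xs)"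
    using assms(3) strict_sorted_iff by blast
  then have "length xs = card A"
    using assms(4) distinct_card distinct_map by metis
  then show ?thesis
    using sorted_key_list_of_set_unique[of A xs] assms by simp
qed

end

lemma comps_sorted_props:
  assumes "chord_family S"
  shows "set (comps_sorted S) = components S" "distinct (comps_sorted S)"
    "sorted_wrt (<) (map min_end (comps_sorted S))"
  unfolding comps_sorted_def
  using sorted_key_list_of_set_props[OF inj_on_min_end_components[OF assms]
      finite_components[OF chord_family_finite[OF assms]]]
  by auto

subsection \<open>The intersection order\<close>

lemma card_component_less:
  assumes "chord_family S" "S \<noteq> {}" "K \<in> components (S - {root S})"
  shows "card K < card S"
proof -
  have "K \<subset> S"
    using components_subset[OF assms(3)] root_in[OF assms(1,2)] by blast
  then show ?thesis
    using psubset_card_mono chord_family_finite[OF assms(1)] by blast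
qed

lemma io_fuel_irrelevant:
  "chord_family S \<Longrightarrow> card S \<le> n \<Longrightarrow> card S \<le> n' \<Longrightarrow> io n S = io n' S"
proof (induction n arbitrary: n' S)
  case 0
  then show ?case
    using chord_family_finite by (cases n') auto
next
  case (Suc n)
  show ?case
  proof (cases "S = {}")
    case False
    then obtain m where m: "n' = Suc m"
      using Suc.prems chord_family_finite by (cases n') auto
    have R: "chord_family (S - {root S})"
      using chord_family_subset Suc.prems(1) by blast
    have "map (io n) (comps_sorted (S - {root S})) = map (io m) (comps_sorted (S - {root S}))"
    proof (rule map_cong[OF refl])
      fix K assume "K \<in> set (comps_sorted (S - {root S}))"
      then have K: "K \<in> components (S - {root S})"
        using comps_sorted_props[OF R] by simp
      show "io n K = io m K"
        using Suc.IH[of K m] card_component_less[OF Suc.prems(1) False K] Suc.prems(2,3) m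
          chord_family_subset[OF R components_subset[OF K]] by simp
    qed
    then show ?thesis
      using m False by (simp only: io.simps(2) if_False)
  qed (cases n'; simp)
qed

lemma io_set_length:
  "chord_family S \<Longrightarrow> card S \<le> n \<Longrightarrow> set (io n S) = S \<and> length (io n S) = card S"
proof (induction n arbitrary: S)
  case 0
  then have "S = {}"
    using chord_family_finite by auto
  then show ?case
    by simp
next
  case (Suc n)
  show ?case
  proof (cases "S = {}")
    case False
    define R where "R = S - {root S}"
    have r: "root S \<in> S"
      using root_in[OF Suc.prems(1) False] by blast
    have R: "chord_family R"
      using chord_family_subset Suc.prems(1) R_def by blast
    have IH: "set (io n K) = K \<and> length (io n K) = card K" if "K \<in> set (comps_sorted R)" for K
    proof -
      have K: "K \<in> components R"
        using that comps_sorted_props[OF R] by simp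
      have "card K < card S"
        using card_component_less[OF Suc.prems(1) False] K R_def by blast
      then have "card K \<le> n"
        using Suc.prems(2) by simp
      then show ?thesis
        using Suc.IH[of K] chord_family_subset[OF R components_subset[OF K]] by simp
    qed
    have "set (concat (map (io n) (comps_sorted R))) = \<Union> (set (comps_sorted R))"
      using IH by auto
    then have set: "set (concat (map (io n) (comps_sorted R))) = R"
      using comps_sorted_props(1)[OF R] Union_components by simp
    have "length (concat (map (io n) (comps_sorted R))) = sum_list (map card (comps_sorted R))"
      by (simp add: length_concat o_def IH cong: map_cong)
    also have "\<dots> = sum card (components R)"
      using sum_list_distinct_conv_sum_set[OF comps_sorted_props(2)[OF R]] comps_sorted_props(1)[OF R]
      by simp
    also have "\<dots> = card (\<Union> (components R))"
    proof (rule card_Union_disjoint[symmetric])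
      show "pairwise disjnt (components R)"
        unfolding pairwise_def disjnt_def using components_disjoint by blast
      show "finite A" if "A \<in> components R" for A
        using finite_subset[OF components_subset[OF that] chord_family_finite[OF R]] .
    qed
    finally have len: "length (concat (map (io n) (comps_sorted R))) = card R"
      by (simp add: Union_components)
    have "card S = Suc (card R)"
      using r R_def chord_family_finite[OF Suc.prems(1)] by (metis card_Suc_Diff1)
    moreover have "io (Suc n) S = root S # concat (map (io n) (comps_sorted R))"
      using False R_def by simp
    ultimately show ?thesis
      using set len r unfolding R_def by (simp add: insert_absorb)
  qed simp
qed

lemma int_order_props:
  assumes "chord_family S"
  shows "set (int_order S) = S" "length (int_order S) = card S" "distinct (int_order S)"
proof -
  show set: "set (int_order S) = S" and len: "length (int_order S) = card S"
    using io_set_length[OF assms, of "card S"] unfolding int_order_def by auto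
  show "distinct (int_order S)"
    using card_distinct set len by metis
qed

lemma int_order_nonempty: "chord_family S \<Longrightarrow> S \<noteq> {} \<Longrightarrow> int_order S \<noteq> []"
  using int_order_props(1) by fastforce

subsection \<open>Invariance under order-preserving relabelling of endpoints\<close>

definition relabel :: "(nat \<Rightarrow> nat) \<Rightarrow> chord \<Rightarrow> chord" where
  "relabel h c = (h (fst c), h (snd c))"

locale endpoint_relabelling =
  fixes S0 :: "chord set" and h :: "nat \<Rightarrow> nat"
  assumes family: "chord_family S0" and mono: "strict_mono_on (ends S0) h"
begin

lemma h_less_iff: "x \<in> ends S0 \<Longrightarrow> y \<in> ends S0 \<Longrightarrow> h x < h y \<longleftrightarrow> x < y"
  using strict_mono_on_less[OF mono] by blast

lemma h_eq_iff: "x \<in> ends S0 \<Longrightarrow> y \<in> ends S0 \<Longrightarrow> h x = h y \<longleftrightarrow> x = y"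
  using strict_mono_on_eqD[OF mono] by blast

lemma inj_on_relabel: "inj_on (relabel h) S0"
proof (rule inj_onI)
  fix c c' assume c: "c \<in> S0" "c' \<in> S0" "relabel h c = relabel h c'"
  then have "fst c = fst c'"
    using h_eq_iff endpoints_in_ends unfolding relabel_def by auto
  then show "c = c'"
    using chord_family_shared_end[OF family c(1,2), of "fst c"] by simp
qed

lemma crosses_relabel:
  assumes "c \<in> S0" "c' \<in> S0"
  shows "crosses (relabel h c) (relabel h c') = crosses c c'"
proof -
  have "fst c \<in> ends S0" "snd c \<in> ends S0" "fst c' \<in> ends S0" "snd c' \<in> ends S0"
    using endpoints_in_ends assms by auto
  then show ?thesis
    unfolding crosses_def using h_less_iff by (simp add: relabel_def)
qed

lemma ends_relabel: "ends (relabel h ` S) = h ` ends S"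
  unfolding ends_def relabel_def by (simp add: image_Un image_image)

lemma Min_h_image:
  assumes "E \<subseteq> ends S0" "finite E" "E \<noteq> {}"
  shows "Min (h ` E) = h (Min E)"
proof (rule Min_eqI)
  have "Min E \<in> E"
    using Min_in assms(2,3) by blast
  then show "h (Min E) \<in> h ` E"
    by simp
  fix y assume "y \<in> h ` E"
  then obtain x where "x \<in> E" "y = h x"
    by blast
  then show "h (Min E) \<le> y"
    using strict_mono_on_less_eq[OF mono] assms \<open>Min E \<in> E\<close> Min_le by blast
qed (use assms(2) in simp)

lemma chord_family_relabel:
  assumes S: "S \<subseteq> S0"
  shows "chord_family (relabel h ` S)"
  unfolding chord_family_def
proof (intro conjI ballI impI)
  show "finite (relabel h ` S)"
    using chord_family_finite[OF chord_family_subset[OF family S]] by simp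
next
  fix c assume "c \<in> relabel h ` S"
  then obtain x where x: "c = relabel h x" "x \<in> S0"
    using S by (auto elim: imageE)
  have "fst x < snd x"
    using family x(2) unfolding chord_family_def by blast
  then show "fst c < snd c"
    using h_less_iff endpoints_in_ends[OF x(2)] x(1) by (simp add: relabel_def)
next
  fix c c' assume c: "c \<in> relabel h ` S" "c' \<in> relabel h ` S" "c \<noteq> c'"
  obtain x where x1: "c = relabel h x" "x \<in> S0"
    using c(1) S by (auto elim: imageE)
  obtain x' where x2: "c' = relabel h x'" "x' \<in> S0"
    using c(2) S by (auto elim: imageE)
  note x = x1 x2
  have "x \<noteq> x'"
    using c(3) x(1,3) by auto
  then have "{fst x, snd x} \<inter> {fst x', snd x'} = {}"
    using family x(2,4) unfolding chord_family_def by blast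
  moreover have e: "fst x \<in> ends S0" "snd x \<in> ends S0" "fst x' \<in> ends S0" "snd x' \<in> ends S0"
    using endpoints_in_ends x(2,4) by auto
  ultimately show "{fst c, snd c} \<inter> {fst c', snd c'} = {}"
    using h_eq_iff[OF e(1) e(3)] h_eq_iff[OF e(1) e(4)] h_eq_iff[OF e(2) e(3)] h_eq_iff[OF e(2) e(4)]
    unfolding x(1,3) relabel_def by auto
qed

lemma root_relabel:
  assumes S: "S \<subseteq> S0" "S \<noteq> {}"
  shows "root (relabel h ` S) = relabel h (root S)"
proof -
  have S': "chord_family S"
    using chord_family_subset[OF family S(1)] .
  have r: "root S \<in> S" "fst (root S) = Min (ends S)"
    using root_in[OF S' S(2)] by auto
  have "Min (ends (relabel h ` S)) = h (Min (ends S))"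
    unfolding ends_relabel
    by (rule Min_h_image[OF ends_mono[OF S(1)] finite_ends[OF chord_family_finite[OF S']]
          ends_nonempty[OF S(2)]])
  then have "fst (relabel h (root S)) = Min (ends (relabel h ` S))"
    using r(2) by (simp add: relabel_def)
  then show ?thesis
    using root_eqI[OF chord_family_relabel[OF S(1)]] r(1) by blast
qed

lemma relabel_cross_rel_rtrancl:
  assumes S: "S \<subseteq> S0" and "(c, c') \<in> (cross_rel S)\<^sup>*"
  shows "(relabel h c, relabel h c') \<in> (cross_rel (relabel h ` S))\<^sup>*"
  using assms(2)
proof (induction rule: rtrancl_induct)
  case (step y z)
  then have yz: "y \<in> S" "z \<in> S" "crosses y z"
    unfolding cross_rel_def by auto
  then have "crosses (relabel h y) (relabel h z)"
    using crosses_relabel[of y z] S by blast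
  then have "(relabel h y, relabel h z) \<in> cross_rel (relabel h ` S)"
    using yz unfolding cross_rel_def by blast
  with step.IH show ?case
    by (rule rtrancl_into_rtrancl)
qed simp

lemma cross_rel_rtrancl_relabel:
  assumes S: "S \<subseteq> S0" and "(relabel h c, y) \<in> (cross_rel (relabel h ` S))\<^sup>*" and c: "c \<in> S"
  shows "\<exists>c'\<in>S. y = relabel h c' \<and> (c, c') \<in> (cross_rel S)\<^sup>*"
  using assms(2)
proof (induction rule: rtrancl_induct)
  case (step y z)
  obtain c' where c': "c' \<in> S" "y = relabel h c'" "(c, c') \<in> (cross_rel S)\<^sup>*"
    using step.IH by blast
  have "z \<in> relabel h ` S" "crosses y z"
    using step.hyps(2) unfolding cross_rel_def by auto
  then obtain z' where z': "z = relabel h z'" "z' \<in> S"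
    by (auto elim: imageE)
  have "crosses c' z'"
    using crosses_relabel[of c' z'] S c'(1,2) z' \<open>crosses y z\<close> by blast
  then have "(c', z') \<in> cross_rel S"
    using c'(1) z'(2) unfolding cross_rel_def by blast
  then have "(c, z') \<in> (cross_rel S)\<^sup>*"
    using c'(3) by (rule rtrancl_into_rtrancl[rotated])
  then show ?case
    using z' by blast
qed (use c in blast)

lemma comp_relabel:
  assumes S: "S \<subseteq> S0" and c: "c \<in> S"
  shows "comp (relabel h ` S) (relabel h c) = relabel h ` comp S c"
proof
  show "comp (relabel h ` S) (relabel h c) \<subseteq> relabel h ` comp S c"
    using cross_rel_rtrancl_relabel[OF S _ c] unfolding comp_def by blast
  show "relabel h ` comp S c \<subseteq> comp (relabel h ` S) (relabel h c)"
  proof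
    fix y assume "y \<in> relabel h ` comp S c"
    then obtain c' where "y = relabel h c'" "c' \<in> S" "(c, c') \<in> (cross_rel S)\<^sup>*"
      unfolding comp_def by blast
    then show "y \<in> comp (relabel h ` S) (relabel h c)"
      using relabel_cross_rel_rtrancl[OF S] unfolding comp_def by blast
  qed
qed

lemma components_relabel:
  assumes S: "S \<subseteq> S0"
  shows "components (relabel h ` S) = image (relabel h) ` components S"
proof -
  have "components (relabel h ` S) = (\<lambda>c. comp (relabel h ` S) (relabel h c)) ` S"
    unfolding components_def by (simp add: image_image)
  also have "\<dots> = image (relabel h) ` components S"
    unfolding components_def using comp_relabel[OF S] by (simp add: image_image cong: image_cong)
  finally show ?thesis .
qed

lemma min_end_relabel:
  assumes "K \<subseteq> S0" "K \<noteq> {}"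
  shows "min_end (relabel h ` K) = h (min_end K)"
  unfolding min_end_def ends_relabel
  using Min_h_image[OF ends_mono finite_ends ends_nonempty] assms
    chord_family_finite[OF chord_family_subset[OF family]]
  by blast

lemma comps_sorted_relabel:
  assumes S: "S \<subseteq> S0"
  shows "comps_sorted (relabel h ` S) = map (image (relabel h)) (comps_sorted S)"
proof -
  note props = comps_sorted_props[OF chord_family_subset[OF family S]]
  have K: "K \<subseteq> S0" "K \<noteq> {}" if "K \<in> set (comps_sorted S)" for K
    using that props(1) components_subset components_nonempty S by blast+
  have "min_end K \<in> ends S0" if "K \<in> set (comps_sorted S)" for K
    using min_end_in K[OF that] ends_mono[OF K(1)[OF that]]
      finite_subset[OF K(1)[OF that] chord_family_finite[OF family]] by blast
  then have "sorted_wrt (\<lambda>K K'. h (min_end K) < h (min_end K')) (comps_sorted S)"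
    using sorted_wrt_mono_rel[of "comps_sorted S" "\<lambda>K K'. min_end K < min_end K'"] props(3)
      h_less_iff by (simp add: sorted_wrt_map)
  then have "sorted_wrt (<) (map min_end (map (image (relabel h)) (comps_sorted S)))"
    using K min_end_relabel by (simp add: sorted_wrt_map sorted_wrt_iff_nth_less)
  moreover have "set (map (image (relabel h)) (comps_sorted S)) = components (relabel h ` S)"
    using props(1) components_relabel[OF S] by simp
  ultimately show ?thesis
    unfolding comps_sorted_def[of "relabel h ` S"]
    using chord_family_relabel[OF S]
    by (intro sorted_key_list_of_set_eqI inj_on_min_end_components finite_components
        chord_family_finite)
qed

lemma io_relabel: "S \<subseteq> S0 \<Longrightarrow> io n (relabel h ` S) = map (relabel h) (io n S)"
proof (induction n arbitrary: S)
  case (Suc n)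
  show ?case
  proof (cases "S = {}")
    case False
    have S: "chord_family S"
      using chord_family_subset[OF family Suc.prems] .
    have "root S \<in> S"
      using root_in[OF S False] by blast
    then have R: "relabel h ` S - {root (relabel h ` S)} = relabel h ` (S - {root S})"
      using root_relabel[OF Suc.prems False] inj_on_image_set_diff[OF inj_on_relabel, of S "{root S}"]
        Suc.prems by auto
    have "K \<subseteq> S0" if "K \<in> set (comps_sorted (S - {root S}))" for K
    proof -
      have "K \<in> components (S - {root S})"
        using that comps_sorted_props(1)[OF chord_family_subset[OF S Diff_subset]] by simp
      then show ?thesis
        using components_subset Suc.prems by blast
    qed
    then have "map (io n) (map (image (relabel h)) (comps_sorted (S - {root S})))
        = map (map (relabel h) \<circ> io n) (comps_sorted (S - {root S}))"
      using Suc.IH by simp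
    moreover have "comps_sorted (relabel h ` (S - {root S}))
        = map (image (relabel h)) (comps_sorted (S - {root S}))"
      using Suc.prems by (intro comps_sorted_relabel) blast
    ultimately show ?thesis
      using False R root_relabel[OF Suc.prems False] by (simp add: map_concat cong: map_cong)
  qed simp
qed simp

lemma int_order_relabel: "S \<subseteq> S0 \<Longrightarrow> int_order (relabel h ` S) = map (relabel h) (int_order S)"
proof -
  assume S: "S \<subseteq> S0"
  then have "card (relabel h ` S) = card S"
    using card_image inj_on_subset[OF inj_on_relabel] by blast
  then show ?thesis
    unfolding int_order_def using io_relabel[OF S] by simp
qed

end

lemma strict_mono_on_rank: "finite S \<Longrightarrow> strict_mono_on (ends S) (rank S)"
proof (rule strict_mono_onI)
  fix x y assume S: "finite S" and xy: "x \<in> ends S" "y \<in> ends S" "x < y"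
  then have "y \<notin> {e \<in> ends S. e \<le> x}" "y \<in> {e \<in> ends S. e \<le> y}"
    by auto
  moreover have "{e \<in> ends S. e \<le> x} \<subseteq> {e \<in> ends S. e \<le> y}"
    using xy by auto
  ultimately have "{e \<in> ends S. e \<le> x} \<subset> {e \<in> ends S. e \<le> y}"
    by blast
  then show "rank S x < rank S y"
    unfolding rank_def using finite_ends[OF S] by (intro psubset_card_mono) auto
qed

lemma endpoint_relabelling_rank: "chord_family S \<Longrightarrow> endpoint_relabelling S (rank S)"
  unfolding endpoint_relabelling_def using strict_mono_on_rank chord_family_finite by blast

lemma nmap_eq_relabel: "nmap S = relabel (rank S)"
  unfolding nmap_def relabel_def by (rule ext) simp

lemma norm_cd_eq: "norm_cd S = relabel (rank S) ` S"
  unfolding norm_cd_def nmap_eq_relabel ..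

lemma
  assumes "chord_family S"
  shows chord_family_norm_cd: "chord_family (norm_cd S)"
    and int_order_norm_cd: "int_order (norm_cd S) = map (nmap S) (int_order S)"
    and inherit_nmap: "c \<in> S \<Longrightarrow> inherit d S (nmap S c) = d c"
    and crosses_nmap: "c \<in> S \<Longrightarrow> c' \<in> S \<Longrightarrow> crosses (nmap S c) (nmap S c') = crosses c c'"
proof -
  interpret endpoint_relabelling S "rank S"
    using endpoint_relabelling_rank[OF assms] .
  show "chord_family (norm_cd S)"
    unfolding norm_cd_eq using chord_family_relabel by blast
  show "int_order (norm_cd S) = map (nmap S) (int_order S)"
    unfolding norm_cd_eq nmap_eq_relabel using int_order_relabel by blast
  show "c \<in> S \<Longrightarrow> inherit d S (nmap S c) = d c"
    unfolding inherit_def nmap_eq_relabel using inv_into_f_f[OF inj_on_relabel] by simp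
  show "c \<in> S \<Longrightarrow> c' \<in> S \<Longrightarrow> crosses (nmap S c) (nmap S c') = crosses c c'"
    unfolding nmap_eq_relabel using crosses_relabel by blast
qed

subsection \<open>Terminal chords along a list\<close>

fun terminal_flags :: "chord list \<Rightarrow> bool list" where
  "terminal_flags [] = []"
| "terminal_flags (x # xs) = (\<forall>y\<in>set xs. \<not> crosses x y) # terminal_flags xs"

lemma length_terminal_flags [simp]: "length (terminal_flags xs) = length xs"
  by (induction xs) auto

lemma nth_terminal_flags:
  "i < length xs \<Longrightarrow>
    terminal_flags xs ! i \<longleftrightarrow> (\<forall>j\<in>{i<..<length xs}. \<not> crosses (xs ! i) (xs ! j))"
proof (induction xs arbitrary: i)
  case (Cons x xs)
  show ?case
  proof (cases i)
    case 0
    have "(\<forall>j\<in>{0<..<Suc (length xs)}. \<not> crosses x (xs ! (j - 1)))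
        \<longleftrightarrow> (\<forall>k<length xs. \<not> crosses x (xs ! k))"
      by (metis Suc_less_eq diff_Suc_1 greaterThanLessThan_iff gr0_conv_Suc zero_less_Suc)
    then show ?thesis
      using 0 by (simp add: all_set_conv_all_nth)
  next
    case (Suc i')
    have "{i<..<length (x # xs)} = Suc ` {i'<..<length xs}"
      using Suc by (auto simp: image_iff gr0_conv_Suc less_Suc_eq_0_disj)
    then show ?thesis
      using Cons Suc by simp
  qed
qed simp

lemma terminal_flags_append:
  assumes "\<forall>x\<in>set xs. \<forall>y\<in>set ys. \<not> crosses x y"
  shows "terminal_flags (xs @ ys) = terminal_flags xs @ terminal_flags ys"
  using assms by (induction xs) (simp_all add: ball_Un)

lemma terminal_flags_map:
  assumes "\<forall>x\<in>set xs. \<forall>y\<in>set xs. crosses (f x) (f y) = crosses x y"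
  shows "terminal_flags (map f xs) = terminal_flags xs"
  using assms by (induction xs) simp_all

lemma terminal_flags_nonempty: "xs \<noteq> [] \<Longrightarrow> terminal_flags xs \<noteq> []"
  by (cases xs) simp_all

lemma last_terminal_flags: "xs \<noteq> [] \<Longrightarrow> last (terminal_flags xs)"
proof (induction xs)
  case (Cons x xs)
  then show ?case
    by (cases xs) simp_all
qed simp

lemma True_in_terminal_flags: "xs \<noteq> [] \<Longrightarrow> True \<in> set (terminal_flags xs)"
  using last_in_set[OF terminal_flags_nonempty] last_terminal_flags by fastforce

lemma terminal_iff_terminal_flags:
  assumes "chord_family S"
  shows "terminal S i \<longleftrightarrow> i \<in> {1..card S} \<and> terminal_flags (int_order S) ! (i - 1)"
proof (cases "i \<in> {1..card S}")
  case True
  let ?P = "\<lambda>j. \<not> crosses (int_order S ! (i - 1)) (int_order S ! j)"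
  have "(\<forall>j\<in>{i<..card S}. ?P (j - 1)) \<longleftrightarrow> (\<forall>j\<in>{i - 1<..<card S}. ?P j)"
  proof
    assume hyp: "\<forall>j\<in>{i<..card S}. ?P (j - 1)"
    show "\<forall>j\<in>{i - 1<..<card S}. ?P j"
    proof
      fix j assume "j \<in> {i - 1<..<card S}"
      then have "Suc j \<in> {i<..card S}"
        using True by auto
      then show "?P j"
        using hyp by (metis diff_Suc_1)
    qed
  next
    assume hyp: "\<forall>j\<in>{i - 1<..<card S}. ?P j"
    show "\<forall>j\<in>{i<..card S}. ?P (j - 1)"
    proof
      fix j assume "j \<in> {i<..card S}"
      then have "j - 1 \<in> {i - 1<..<card S}"
        using True by auto
      then show "?P (j - 1)"
        using hyp by blast
    qed
  qed
  moreover have "i - 1 < length (int_order S)"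
    using True int_order_props(2)[OF assms] by auto
  ultimately show ?thesis
    unfolding terminal_def chord_lab_def using nth_terminal_flags True int_order_props(2)[OF assms]
    by simp
qed (auto simp: terminal_def)

lemma length_takeWhile_less: "x \<in> set xs \<Longrightarrow> \<not> P x \<Longrightarrow> length (takeWhile P xs) < length xs"
  by (induction xs) auto

lemma base_eq_first_terminal_flag:
  assumes S: "chord_family S" "S \<noteq> {}"
  shows "base S = Suc (length (takeWhile Not (terminal_flags (int_order S))))"
proof -
  define fs where "fs = terminal_flags (int_order S)"
  define k where "k = length (takeWhile Not fs)"
  have len: "length fs = card S"
    unfolding fs_def using int_order_props(2)[OF S(1)] by simp
  have "k < card S"
    unfolding k_def fs_def using True_in_terminal_flags[OF int_order_nonempty[OF S]]
      length_takeWhile_less[of True _ Not] int_order_props(2)[OF S(1)] by fastforce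
  have terminals: "terminals S = {i. i \<in> {1..card S} \<and> fs ! (i - 1)}"
    unfolding terminals_def fs_def using terminal_iff_terminal_flags[OF S(1)] by blast
  show ?thesis
    unfolding base_def fs_def[symmetric] k_def[symmetric]
  proof (rule Min_eqI)
    show "finite (terminals S)"
      unfolding terminals by simp
    show "Suc k \<in> terminals S"
      unfolding terminals using \<open>k < card S\<close> nth_length_takeWhile[of Not fs] len k_def by simp
    fix i assume "i \<in> terminals S"
    then have "i \<in> {1..card S}" "fs ! (i - 1)"
      unfolding terminals by auto
    have "\<not> i - 1 < k"
    proof
      assume "i - 1 < k"
      then have "fs ! (i - 1) \<in> set (takeWhile Not fs)"
        using takeWhile_nth[of "i - 1" Not fs] nth_mem[of "i - 1" "takeWhile Not fs"]
        unfolding k_def by simp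
      then show False
        using set_takeWhileD \<open>fs ! (i - 1)\<close> by fastforce
    qed
    then show "Suc k \<le> i"
      using \<open>i \<in> {1..card S}\<close> by auto
  qed
qed

lemma base_range:
  assumes "chord_family S" "S \<noteq> {}"
  shows "1 \<le> base S" "base S \<le> card S"
proof -
  have "True \<in> set (terminal_flags (int_order S))"
    using True_in_terminal_flags[OF int_order_nonempty[OF assms]] .
  then show "1 \<le> base S" "base S \<le> card S"
    using base_eq_first_terminal_flag[OF assms] length_takeWhile_less[of True _ Not]
      int_order_props(2)[OF assms(1)] by fastforce+
qed

subsection \<open>Gap products\<close>

text \<open>The monomial read along the intersection order: \<open>g\<close> is the distance back to the last terminal
  position (\<open>None\<close> before the first one), a non-terminal position contributes \<open>f 0\<close> and a
  terminal one \<open>f g\<close>.\<close>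

fun gap_prod :: "nat option \<Rightarrow> bool list \<Rightarrow> (nat \<Rightarrow> 'a::comm_monoid_mult) list \<Rightarrow> 'a" where
  "gap_prod g (t # ts) (f # fs) =
     (if t then (case g of None \<Rightarrow> 1 | Some j \<Rightarrow> f j) * gap_prod (Some 1) ts fs
      else f 0 * gap_prod (map_option Suc g) ts fs)"
| "gap_prod g _ _ = 1"

lemma gap_prod_Some_upt:
  fixes T :: "nat set"
  shows "gap_prod (Some j) (map (\<lambda>i. i \<in> T) [p..<p + n]) (map f [p..<p + n])
    = (let L = filter (\<lambda>i. i \<in> T) [p..<p + n] in
       \<Prod>c<length L. f (L ! c) (if c = 0 then j + L ! 0 - p else L ! c - L ! (c - 1)))
      * (\<Prod>i\<in>{p..<p + n} - T. f i 0)"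
proof (induction n arbitrary: j p)
  case (Suc n)
  have upt: "[p..<p + Suc n] = p # [Suc p..<Suc (p + n)]"
    by (simp add: upt_conv_Cons del: upt_Suc)
  define L' where "L' = filter (\<lambda>i. i \<in> T) [Suc p..<Suc (p + n)]"
  show ?case
  proof (cases "p \<in> T")
    case True
    have "(\<Prod>c<length (p # L'). f ((p # L') ! c)
          (if c = 0 then j + (p # L') ! 0 - p else (p # L') ! c - (p # L') ! (c - 1)))
        = f p j * (\<Prod>c<length L'. f (L' ! c) (if c = 0 then 1 + L' ! 0 - Suc p else L' ! c - L' ! (c - 1)))"
      by (simp add: prod.lessThan_Suc_shift del: prod.lessThan_Suc)
        (rule arg_cong[where f = "\<lambda>x. f p j * x"], rule prod.cong, auto simp: nth_Cons')
    moreover have "{p..<p + Suc n} - T = {Suc p..<Suc (p + n)} - T"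
      using True by (auto simp: Suc_le_eq order_le_less)
    ultimately show ?thesis
      using True Suc.IH[of 1 "Suc p"] upt unfolding L'_def by (simp add: Let_def mult.assoc del: upt_Suc)
  next
    case False
    have "{p..<p + Suc n} - T = insert p ({Suc p..<Suc (p + n)} - T)"
      using False by auto
    then show ?thesis
      using False Suc.IH[of "Suc j" "Suc p"] upt by (simp add: Let_def algebra_simps del: upt_Suc cong: if_cong)
  qed
qed simp

lemma gap_prod_None_upt:
  fixes T :: "nat set"
  shows "gap_prod None (map (\<lambda>i. i \<in> T) [p..<p + n]) (map f [p..<p + n])
    = (let L = filter (\<lambda>i. i \<in> T) [p..<p + n] in \<Prod>c\<in>{1..<length L}. f (L ! c) (L ! c - L ! (c - 1)))
      * (\<Prod>i\<in>{p..<p + n} - T. f i 0)"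
proof (induction n arbitrary: p)
  case (Suc n)
  have upt: "[p..<p + Suc n] = p # [Suc p..<Suc (p + n)]"
    by (simp add: upt_conv_Cons del: upt_Suc)
  define L' where "L' = filter (\<lambda>i. i \<in> T) [Suc p..<Suc (p + n)]"
  show ?case
  proof (cases "p \<in> T")
    case True
    have "(\<Prod>c\<in>{1..<length (p # L')}. f ((p # L') ! c) ((p # L') ! c - (p # L') ! (c - 1)))
        = (\<Prod>c<length L'. f (L' ! c) (if c = 0 then 1 + L' ! 0 - Suc p else L' ! c - L' ! (c - 1)))"
      using prod.atLeast_Suc_lessThan_Suc_shift[of "\<lambda>c. f ((p # L') ! c) ((p # L') ! c - (p # L') ! (c - 1))"
          0 "length L'"]
      by (simp add: atLeast0LessThan) (rule prod.cong, auto simp: nth_Cons')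
    moreover have "{p..<p + Suc n} - T = {Suc p..<Suc (p + n)} - T"
      using True by (auto simp: Suc_le_eq order_le_less)
    ultimately show ?thesis
      using True gap_prod_Some_upt[of 1 T "Suc p" n f] upt unfolding L'_def by (simp add: Let_def del: upt_Suc)
  next
    case False
    have "{p..<p + Suc n} - T = insert p ({Suc p..<Suc (p + n)} - T)"
      using False by auto
    then show ?thesis
      using False Suc.IH[of "Suc p"] upt by (simp add: Let_def algebra_simps del: upt_Suc)
  qed
qed simp

lemma sorted_list_of_set_eq_filter_upt:
  fixes T :: "nat set"
  assumes "T \<subseteq> {p..<p + n}"
  shows "sorted_list_of_set T = filter (\<lambda>i. i \<in> T) [p..<p + n]"
proof -
  let ?l = "filter (\<lambda>i. i \<in> T) [p..<p + n]"
  have "sorted_wrt (<) ?l"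
    by (simp add: sorted_wrt_filter del: upt_Suc)
  moreover have "set ?l = T"
    using assms by auto
  moreover have "length ?l = card T"
    using distinct_card[of ?l] calculation by (simp add: strict_sorted_iff)
  ultimately show ?thesis
    using sorted_list_of_set_unique[OF finite_subset[OF assms], of ?l] strict_sorted_iff by blast
qed

lemma monomial_eq_gap_prod:
  assumes S: "chord_family S"
  shows "monomial a d S = gap_prod None (terminal_flags (int_order S)) (map (\<lambda>c. a (d c)) (int_order S))"
proof -
  have len: "length (int_order S) = card S"
    using int_order_props(2)[OF S] .
  have "terminals S \<subseteq> {1..<1 + card S}"
    unfolding terminals_def terminal_def by auto
  note sorted_terminals = sorted_list_of_set_eq_filter_upt[OF this]
  have "{1..card S} = {1..<1 + card S}"
    by auto
  then have "monomial a d S = gap_prod None (map (\<lambda>i. i \<in> terminals S) [1..<1 + card S])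
      (map (\<lambda>i. a (d (chord_lab S i))) [1..<1 + card S])"
    unfolding monomial_def gap_prod_None_upt Let_def sorted_terminals by simp
  moreover have "map (\<lambda>i. i \<in> terminals S) [1..<1 + card S] = terminal_flags (int_order S)"
    using terminal_iff_terminal_flags[OF S] len by (intro nth_equalityI) (simp_all add: terminals_def del: upt_Suc)
  moreover have "map (\<lambda>i. a (d (chord_lab S i))) [1..<1 + card S] = map (\<lambda>c. a (d c)) (int_order S)"
    using len by (intro nth_equalityI) (simp_all add: chord_lab_def del: upt_Suc)
  ultimately show ?thesis
    by simp
qed

lemma gap_prod_append:
  assumes "length ts = length fs" "ts \<noteq> []" "last ts"
  shows "gap_prod g (ts @ ts') (fs @ fs') = gap_prod g ts fs * gap_prod (Some 1) ts' fs'"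
  using assms
proof (induction ts fs arbitrary: g rule: list_induct2)
  case (Cons t ts f fs)
  then show ?case
    by (cases "ts = []") (auto simp: mult.assoc)
qed simp

lemma gap_prod_Some_0_Cons: "gap_prod (Some 0) (t # ts) (f # fs) = f 0 * gap_prod (Some 1) ts fs"
  by simp

text \<open>Starting with a virtual terminal \<open>j\<close> positions before the list only changes the factor of
  the first terminal position \<open>k\<close>, which now sees the distance \<open>j + k\<close>.\<close>

lemma gap_prod_Some_first_terminal:
  assumes "length ts = length fs" "True \<in> set ts"
  shows "gap_prod (Some j) ts fs
    = gap_prod None ts fs * (fs ! length (takeWhile Not ts)) (j + length (takeWhile Not ts))"
  using assms
proof (induction ts fs arbitrary: j rule: list_induct2)
  case (Cons t ts f fs)
  show ?case
  proof (cases t)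
    case False
    then show ?thesis
      using Cons.IH[of "Suc j"] Cons.prems by (simp add: mult.assoc)
  qed (simp add: mult.commute)
qed simp

lemma monomial_mult_base_factor:
  assumes S: "chord_family S" "S \<noteq> {}"
  shows "monomial a d S * a (d (chord_lab S (base S))) (j + (base S - 1))
    = gap_prod (Some j) (terminal_flags (int_order S)) (map (\<lambda>c. a (d c)) (int_order S))"
proof -
  let ?ts = "terminal_flags (int_order S)"
  have "True \<in> set ?ts"
    using True_in_terminal_flags[OF int_order_nonempty[OF S]] .
  moreover from this have "length (takeWhile Not ?ts) < length (int_order S)"
    using length_takeWhile_less[of True ?ts Not] by simp
  ultimately show ?thesis
    using gap_prod_Some_first_terminal[of ?ts "map (\<lambda>c. a (d c)) (int_order S)" j]
      base_eq_first_terminal_flag[OF S] monomial_eq_gap_prod[OF S(1), of a d]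
    by (simp add: chord_lab_def)
qed

lemma terminal_flags_int_order_norm_cd:
  assumes "chord_family S"
  shows "terminal_flags (int_order (norm_cd S)) = terminal_flags (int_order S)"
  unfolding int_order_norm_cd[OF assms]
  using crosses_nmap[OF assms] int_order_props(1)[OF assms] by (intro terminal_flags_map) simp

lemma monomial_norm_cd:
  assumes "chord_family S"
  shows "monomial a (inherit d S) (norm_cd S) = monomial a d S"
proof -
  have "map (\<lambda>c. a (inherit d S c)) (int_order (norm_cd S)) = map (\<lambda>c. a (d c)) (int_order S)"
    unfolding int_order_norm_cd[OF assms] using inherit_nmap[OF assms] int_order_props(1)[OF assms]
    by simp
  then show ?thesis
    using monomial_eq_gap_prod chord_family_norm_cd[OF assms] assms
      terminal_flags_int_order_norm_cd[OF assms] by metis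
qed

lemma base_norm_cd:
  assumes "chord_family S"
  shows "base (norm_cd S) = base S"
proof (cases "S = {}")
  case False
  then show ?thesis
    using base_eq_first_terminal_flag chord_family_norm_cd[OF assms] assms
      terminal_flags_int_order_norm_cd[OF assms] unfolding norm_cd_def by (metis image_is_empty)
qed (simp add: norm_cd_def)

lemma inherit_chord_lab_norm_cd:
  assumes "chord_family S" "i \<in> {1..card S}"
  shows "inherit d S (chord_lab (norm_cd S) i) = d (chord_lab S i)"
proof -
  have "i - 1 < length (int_order S)"
    using assms int_order_props(2)[OF assms(1)] by auto
  then have "int_order S ! (i - 1) \<in> S"
    using nth_mem int_order_props(1)[OF assms(1)] by blast
  then show ?thesis
    unfolding chord_lab_def int_order_norm_cd[OF assms(1)]
    using inherit_nmap[OF assms(1)] \<open>i - 1 < length (int_order S)\<close> by simp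
qed

subsection \<open>The root share decomposition\<close>

lemma connected_cd_crossing_partner:
  assumes "connected_cd C" "c \<in> C" "c' \<in> C" "c \<noteq> c'"
  shows "\<exists>x\<in>C. crosses c x"
proof -
  have "(c, c') \<in> (cross_rel C)\<^sup>*"
    using assms unfolding connected_cd_def by blast
  then show ?thesis
    using assms(4) by (cases rule: converse_rtranclE) (auto simp: cross_rel_def)
qed

locale root_share =
  fixes C :: "chord set"
  assumes family: "chord_family C" and connected: "connected_cd C" and card_ge_2: "card C \<ge> 2"
begin

text \<open>\<open>K\<close> and \<open>L\<close> normalize to \<open>C2\<close> and \<open>C1\<close>; \<open>Q\<close> is the intersection order of \<open>C1\<close>
  after its root (lemma \<open>int_order_L\<close>).\<close>

abbreviation "r \<equiv> root C"
abbreviation "R \<equiv> C - {root C}"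
abbreviation "K \<equiv> first_comp C"
abbreviation "L \<equiv> C - first_comp C"
abbreviation "Q \<equiv> concat (map (io (card C - 1)) (tl (comps_sorted (C - {root C}))))"

lemma C_nonempty: "C \<noteq> {}"
  using card_ge_2 by auto

lemma root_C: "r \<in> C" "fst r = Min (ends C)"
  using root_in[OF family C_nonempty] by auto

lemma card_R: "card R = card C - 1"
  using root_C chord_family_finite[OF family] by simp

lemma R_family: "chord_family R"
  using chord_family_subset[OF family Diff_subset] .

lemma R_nonempty: "R \<noteq> {}"
proof -
  have "card R \<noteq> 0"
    using card_R card_ge_2 by simp
  then show ?thesis
    by (metis card.empty)
qed

lemma comps_sorted_R: "comps_sorted R = K # tl (comps_sorted R)"
proof -
  have "components R \<noteq> {}"
    using Union_components[of R] R_nonempty by auto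
  then show ?thesis
    unfolding first_comp_def using comps_sorted_props(1)[OF R_family] by (cases "comps_sorted R") auto
qed

lemma K_component: "K \<in> components R"
  using comps_sorted_props(1)[OF R_family] comps_sorted_R by (metis list.set_intros(1))

lemma K_subset: "K \<subseteq> R"
  using components_subset[OF K_component] .

lemma K_nonempty: "K \<noteq> {}"
  using components_nonempty[OF K_component] .

lemma K_family: "chord_family K"
  using chord_family_subset[OF R_family K_subset] .

lemma L_family: "chord_family L"
  using chord_family_subset[OF family Diff_subset] .

lemma root_L: "r \<in> L" "root L = r"
proof -
  show "r \<in> L"
    using root_C(1) K_subset by blast
  moreover have "fst r = Min (ends L)"
  proof (rule Min_eqI[symmetric])
    show "finite (ends L)"
      using finite_ends chord_family_finite[OF L_family] by blast
    show "fst r \<in> ends L"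
      using endpoints_in_ends(1) calculation .
    fix e assume "e \<in> ends L"
    then have "e \<in> ends C"
      using ends_mono[of L C] by blast
    then show "fst r \<le> e"
      using root_C(2) finite_ends[OF chord_family_finite[OF family]] by simp
  qed
  ultimately show "root L = r"
    using root_eqI[OF L_family] by simp
qed

lemma L_nonempty: "L \<noteq> {}"
  using root_L(1) by blast

lemma comps_sorted_R_Diff_K: "comps_sorted (R - K) = tl (comps_sorted R)"
proof -
  have RK: "chord_family (R - K)"
    using chord_family_subset[OF R_family Diff_subset] .
  have "sorted_wrt (<) (map min_end (K # tl (comps_sorted R)))"
    using comps_sorted_props(3)[OF R_family] comps_sorted_R by metis
  moreover have "distinct (K # tl (comps_sorted R))"
    using comps_sorted_props(2)[OF R_family] comps_sorted_R by metis
  moreover have "set (K # tl (comps_sorted R)) = components R"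
    using comps_sorted_props(1)[OF R_family] comps_sorted_R by metis
  ultimately have "sorted_wrt (<) (map min_end (tl (comps_sorted R)))"
    and "set (tl (comps_sorted R)) = components (R - K)"
    using components_Diff_component[OF K_component] by auto
  then show ?thesis
    unfolding comps_sorted_def[of "R - K"]
    by (intro sorted_key_list_of_set_eqI inj_on_min_end_components[OF RK]
        finite_components chord_family_finite[OF RK])
qed

lemma int_order_C: "int_order C = r # int_order K @ Q"
proof -
  have "card K \<le> card C - 1"
    using card_mono[OF chord_family_finite[OF R_family] K_subset] card_R by simp
  then have "io (card C - 1) K = int_order K"
    unfolding int_order_def using io_fuel_irrelevant[OF K_family, of "card C - 1" "card K"] by simp
  moreover have "int_order C = io (Suc (card C - 1)) C"
    unfolding int_order_def using card_ge_2 by simp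
  then have "int_order C = r # concat (map (io (card C - 1)) (comps_sorted R))"
    using C_nonempty by (simp only: io.simps(2) if_False)
  ultimately show ?thesis
    using comps_sorted_R by (metis concat.simps(2) list.simps(9))
qed

lemma int_order_L: "int_order L = r # Q"
proof -
  have RK: "chord_family (R - K)"
    using chord_family_subset[OF R_family Diff_subset] .
  have L_minus: "L - {r} = R - K"
    by blast
  have card_L: "card L = Suc (card (R - K))"
    using root_L(1) chord_family_finite[OF L_family] L_minus by (metis card_Suc_Diff1)
  have "io (card (R - K)) K' = io (card C - 1) K'" if "K' \<in> set (tl (comps_sorted R))" for K'
  proof -
    have "K' \<subseteq> R - K"
      using that comps_sorted_R_Diff_K comps_sorted_props(1)[OF RK] components_subset by metis
    moreover have "card (R - K) \<le> card C - 1"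
      using card_mono[OF chord_family_finite[OF R_family], of "R - K"] card_R by auto
    moreover have "card K' \<le> card (R - K)"
      using card_mono[OF chord_family_finite[OF RK] \<open>K' \<subseteq> R - K\<close>] .
    ultimately show ?thesis
      using chord_family_subset[OF RK] by (intro io_fuel_irrelevant) auto
  qed
  then have "map (io (card (R - K))) (tl (comps_sorted R))
      = map (io (card C - 1)) (tl (comps_sorted R))"
    by simp
  with L_nonempty show ?thesis
    unfolding int_order_def card_L using root_L(2) L_minus comps_sorted_R_Diff_K
    by (simp only: io.simps(2) if_False)
qed

lemma set_Q: "set Q = R - K"
proof -
  have "distinct (r # Q)" "set (r # Q) = L"
    using int_order_props(1,3)[OF L_family] int_order_L by metis+
  then show ?thesis
    by auto
qed

lemma K_Q_no_crossing: "\<forall>x\<in>set (int_order K). \<forall>y\<in>set Q. \<not> crosses x y"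
proof (intro ballI)
  fix x y assume "x \<in> set (int_order K)" "y \<in> set Q"
  then have x: "x \<in> K" and y: "y \<in> R" "y \<notin> K"
    using int_order_props(1)[OF K_family] set_Q by auto
  have "comp R y \<in> components R" "y \<in> comp R y"
    using y(1) comp_self unfolding components_def by auto
  moreover have "comp R y \<noteq> K"
    using y(2) calculation(2) by blast
  ultimately show "\<not> crosses x y"
    using components_no_crossing[OF K_component] x by blast
qed

lemma root_crosses: "\<exists>y\<in>set (int_order K @ Q). crosses r y"
proof -
  obtain c where "c \<in> C" "c \<noteq> r"
    using R_nonempty by blast
  then obtain y where y: "y \<in> C" "crosses r y"
    using connected_cd_crossing_partner[OF connected root_C(1)] by metis
  moreover have "y \<noteq> r"
    using y(2) unfolding crosses_def by auto
  moreover have "set (int_order K @ Q) = R"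
    using int_order_props(1)[OF K_family] set_Q K_subset by auto
  ultimately show ?thesis
    by blast
qed

lemma terminal_flags_C:
  "terminal_flags (int_order C) = False # terminal_flags (int_order K) @ terminal_flags Q"
  unfolding int_order_C using root_crosses terminal_flags_append[OF K_Q_no_crossing] by simp

lemma base_C: "base C = Suc (base K)"
proof -
  have "True \<in> set (terminal_flags (int_order K))"
    using True_in_terminal_flags[OF int_order_nonempty[OF K_family K_nonempty]] .
  then show ?thesis
    using base_eq_first_terminal_flag[OF family C_nonempty]
      base_eq_first_terminal_flag[OF K_family K_nonempty]
    unfolding terminal_flags_C by (simp add: takeWhile_append1)
qed

lemma chord_lab_base_C: "chord_lab C (base C) = chord_lab K (base K)"
proof -
  have "base K - 1 < length (int_order K)"
    using base_range[OF K_family K_nonempty] int_order_props(2)[OF K_family] by simp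
  then show ?thesis
    unfolding chord_lab_def base_C int_order_C using base_range[OF K_family K_nonempty]
    by (simp add: nth_append)
qed

lemma monomial_root_share:
  fixes a :: "nat \<Rightarrow> nat \<Rightarrow> 'r::comm_ring_1"
  assumes "l \<le> base K"
  shows "monomial a d C * a (d (chord_lab C (base C))) (base C - l)
       = monomial a d L * a (d (chord_lab L (base L))) (base L - 1)
         * monomial a d K * a (d (chord_lab K (base K))) (base K - l + 1)"
proof -
  let ?fs = "\<lambda>xs. map (\<lambda>c. a (d c)) xs"
  let ?P = "int_order K"
  have "terminal_flags ?P \<noteq> []" "last (terminal_flags ?P)"
    using int_order_nonempty[OF K_family K_nonempty] terminal_flags_nonempty last_terminal_flags
    by blast+
  then have "monomial a d C = a (d r) 0 * gap_prod None (terminal_flags ?P) (?fs ?P)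
      * gap_prod (Some 1) (terminal_flags Q) (?fs Q)"
    using monomial_eq_gap_prod[OF family, of a d] gap_prod_append[of "terminal_flags ?P" "?fs ?P"]
    unfolding terminal_flags_C by (simp add: int_order_C mult.assoc)
  moreover have "monomial a d L * a (d (chord_lab L (base L))) (base L - 1)
      = a (d r) 0 * gap_prod (Some 1) (terminal_flags Q) (?fs Q)"
    using monomial_mult_base_factor[OF L_family L_nonempty, of a d 0]
    unfolding int_order_L terminal_flags.simps list.map gap_prod_Some_0_Cons by simp
  moreover have "monomial a d K = gap_prod None (terminal_flags ?P) (?fs ?P)"
    using monomial_eq_gap_prod[OF K_family] .
  moreover have "base C - l = base K - l + 1"
    using assms base_C by simp
  ultimately show ?thesis
    unfolding chord_lab_base_C by (simp add: ac_simps)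
qed

end

theorem mainTheorem4:
  fixes a :: "nat \<Rightarrow> nat \<Rightarrow> 'r::comm_ring_1"
    and C :: "chord set" and d :: "chord \<Rightarrow> nat" and l :: nat
  assumes "is_cd C" and "connected_cd C" and "card C \<ge> 2"
    and "\<forall>c\<in>C. d c \<ge> 1"
    and "1 < l" and "l < base C"
  shows "monomial a d C * a (d (chord_lab C (base C))) (base C - l)
       = monomial a (inherit d (C - first_comp C)) (rs_left C)
           * a (inherit d (C - first_comp C) (chord_lab (rs_left C) (base (rs_left C))))
               (base (rs_left C) - 1)
         * monomial a (inherit d (first_comp C)) (rs_right C)
           * a (inherit d (first_comp C) (chord_lab (rs_right C) (base (rs_right C))))
               (base (rs_right C) - l + 1)"
proof -
  interpret root_share C
    using assms(1-3) is_cd_chord_family by unfold_locales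
  have L: "inherit d L (chord_lab (rs_left C) (base (rs_left C))) = d (chord_lab L (base L))"
    unfolding rs_left_def base_norm_cd[OF L_family]
    using inherit_chord_lab_norm_cd[OF L_family] base_range[OF L_family L_nonempty] by simp
  have K: "inherit d K (chord_lab (rs_right C) (base (rs_right C))) = d (chord_lab K (base K))"
    unfolding rs_right_def base_norm_cd[OF K_family]
    using inherit_chord_lab_norm_cd[OF K_family] base_range[OF K_family K_nonempty] by simp
  have "l \<le> base K"
    using assms(6) base_C by simp
  then show ?thesis
    unfolding L K using monomial_root_share
    by (simp add: rs_left_def rs_right_def monomial_norm_cd L_family K_family base_norm_cd)
qed

end
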